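(* Let $H$ be a twin-free simple graph on $n$ vertices, and let $i(H)$ be the minimum cardinality of an identifying code of $H$. Label the vertices of $H$ by $1,\dots,n$ via a bijection chosen uniformly at random among all $n!$ bijections, obtaining a graph $G$ on $\{1,\dots,n\}$, and run the lexicographic algorithm (Algorithm 1) on $G$. Then for every $K\in\{1,\dots,n\}$, the probability that the returned code has cardinality at most $K$ is at least the probability that $\{1,\dots,K\}$ is an identifying code of $G$. In particular, the algorithm returns an identifying code of cardinality $i(H)$ with probability at least $1/\binom{n}{i(H)}$.
   Context: For a graph on vertex set $\{1,\dots,n\}$ (vertices ordered by the usual order of integers) and a vertex $v$, $N(v)=\{v\}\cup\{w : vw\in E\}$ is its closed neighbourhood. A set $C$ of vertices is an identifying code if the sets $N(v)\cap C$, $v$ a vertex, are all nonempty and pairwise distinct. A graph is twin-free if $N(v)\neq N(w)$ for all distinct vertices $v,w$. The lexicographic algorithm (Algorithm 1) on a graph $G$ with vertex set $\{1,\dots,n\}$: set $C_0=\emptyset$. For $j=1,2,\dots,n$ in turn: (i) if $N(j)\cap C_{j-1}=\emptyset$, set $C_j=C_{j-1}\cup\{\min N(j)\}$; (ii) otherwise, if there exists $k\in\{1,\dots,j-1\}$ with $N(k)\cap C_{j-1}=N(j)\cap C_{j-1}$, let $k$ be the least such index; if $N(j)\neq N(k)$ set $C_j=C_{j-1}\cup\{\min(N(j)\triangle N(k))\}$, while if $N(j)=N(k)$ the algorithm stops immediately and returns "failure"; (iii) otherwise set $C_j=C_{j-1}$. If the algorithm never fails, it returns $C_n$. Here $\triangle$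 denotes symmetric difference. *)

theory Defs
  imports "HOL-Probability.Probability_Mass_Function" "HOL-Combinatorics.Multiset_Permutations"
begin

definition simple_graph :: "'a set \<Rightarrow> ('a \<Rightarrow> 'a \<Rightarrow> bool) \<Rightarrow> bool" where
  "simple_graph V E \<longleftrightarrow> finite V \<and> (\<forall>x y. E x y \<longrightarrow> E y x) \<and> (\<forall>x. \<not> E x x)
     \<and> (\<forall>x y. E x y \<longrightarrow> x \<in> V \<and> y \<in> V)"

definition nbhd :: "'a set \<Rightarrow> ('a \<Rightarrow> 'a \<Rightarrow> bool) \<Rightarrow> 'a \<Rightarrow> 'a set" where
  "nbhd V E v = {v} \<union> {w \<in> V. E v w}"

definition identifying_code :: "'a set \<Rightarrow> ('a \<Rightarrow> 'a \<Rightarrow> bool) \<Rightarrow> 'a set \<Rightarrow> bool" where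
  "identifying_code V E C \<longleftrightarrow> C \<subseteq> V
     \<and> (\<forall>v\<in>V. nbhd V E v \<inter> C \<noteq> {})
     \<and> (\<forall>v\<in>V. \<forall>w\<in>V. v \<noteq> w \<longrightarrow> nbhd V E v \<inter> C \<noteq> nbhd V E w \<inter> C)"

definition twin_free :: "'a set \<Rightarrow> ('a \<Rightarrow> 'a \<Rightarrow> bool) \<Rightarrow> bool" where
  "twin_free V E \<longleftrightarrow> (\<forall>v\<in>V. \<forall>w\<in>V. v \<noteq> w \<longrightarrow> nbhd V E v \<noteq> nbhd V E w)"

definition id_code_number :: "'a set \<Rightarrow> ('a \<Rightarrow> 'a \<Rightarrow> bool) \<Rightarrow> nat" where
  "id_code_number V E = (LEAST k. \<exists>C. identifying_code V E C \<and> card C = k)"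

text \<open>The graph on {1..n} obtained by labelling: vertex xs!(i-1) receives label i.
  A duplicate-free list xs with set xs = V encodes a bijection V -> {1..n}.\<close>
definition relabel :: "('a \<Rightarrow> 'a \<Rightarrow> bool) \<Rightarrow> 'a list \<Rightarrow> nat \<Rightarrow> nat \<Rightarrow> bool" where
  "relabel E xs i j = E (xs ! (i - 1)) (xs ! (j - 1))"

text \<open>One step (vertex j) of the lexicographic algorithm on a graph on {1..n};
  None means failure.\<close>
definition lex_step :: "nat \<Rightarrow> (nat \<Rightarrow> nat \<Rightarrow> bool) \<Rightarrow> nat \<Rightarrow> nat set \<Rightarrow> nat set option" where
  "lex_step n G j C =
     (let N = nbhd {1..n} G in
      if N j \<inter> C = {} then Some (C \<union> {Min (N j)})
      else if (\<exists>k\<in>{1..<j}. N k \<inter> C = N j \<inter> C) then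
        (let k = (LEAST k. k \<in> {1..<j} \<and> N k \<inter> C = N j \<inter> C) in
         if N j \<noteq> N k then Some (C \<union> {Min ((N j - N k) \<union> (N k - N j))}) else None)
      else Some C)"

primrec lex_run :: "nat \<Rightarrow> (nat \<Rightarrow> nat \<Rightarrow> bool) \<Rightarrow> nat \<Rightarrow> nat set option" where
  "lex_run n G 0 = Some {}"
| "lex_run n G (Suc j) = (case lex_run n G j of None \<Rightarrow> None | Some C \<Rightarrow> lex_step n G (Suc j) C)"

definition lex_algorithm :: "nat \<Rightarrow> (nat \<Rightarrow> nat \<Rightarrow> bool) \<Rightarrow> nat set option" where
  "lex_algorithm n G = lex_run n G n"

end

theory Submission
  imports Defs
begin

(*
  If {1..K} is an identifying code of the labelled graph, the lexicographic algorithm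
  never fails and only adds vertices \<le> K: the set it takes the minimum of at step j,
  N(j) or N(j) \<triangle> N(k) with N(j) \<inter> C = N(k) \<inter> C, meets {1..K} because {1..K}
  separates j from k. Conversely, step j makes j distinguishable from all earlier
  vertices, so every completed run returns an identifying code. Hence the algorithm
  returns a minimum code whenever some minimum code of H receives the labels
  1, ..., i(H), and this happens for at least i(H)! (n - i(H))! of the n! labellings.
*)

lemma Min_in_atLeastAtMost:
  fixes S :: "'a::linorder set"
  assumes "finite S" "S \<inter> {a..b} \<noteq> {}" "\<forall>x\<in>S. a \<le> x"
  shows "Min S \<in> {a..b}"
proof -
  from assms(2) obtain x where x: "x \<in> S" "x \<le> b" by auto
  have "Min S \<in> S" "Min S \<le> x" using assms(1) x(1) by (auto intro: Min_in)
  then show ?thesis using assms(3) x(2) by auto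
qed

lemma nbhd_atLeastAtMost:
  fixes j n :: nat
  assumes "j \<in> {1..n}"
  shows "j \<in> nbhd {1..n} G j" "nbhd {1..n} G j \<subseteq> {1..n}" "finite (nbhd {1..n} G j)"
proof -
  show "j \<in> nbhd {1..n} G j" and sub: "nbhd {1..n} G j \<subseteq> {1..n}"
    using assms by (auto simp: nbhd_def)
  show "finite (nbhd {1..n} G j)"
    using sub by (rule finite_subset) simp
qed

text \<open>Case \<open>separate\<close> forgets that the algorithm picks the least such k; no argument
  below needs it.\<close>

lemma lex_step_cases:
  fixes n j :: nat and G :: "nat \<Rightarrow> nat \<Rightarrow> bool"
  defines "N \<equiv> nbhd {1..n} G"
  obtains (new) "N j \<inter> C = {}" "lex_step n G j C = Some (insert (Min (N j)) C)"
  | (separate) k where "k \<in> {1..<j}" "N k \<inter> C = N j \<inter> C" "N j \<noteq> N k"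
      "lex_step n G j C = Some (insert (Min ((N j - N k) \<union> (N k - N j))) C)"
  | (twins) k where "k \<in> {1..<j}" "N j = N k" "lex_step n G j C = None"
  | (keep) "N j \<inter> C \<noteq> {}" "\<forall>k\<in>{1..<j}. N k \<inter> C \<noteq> N j \<inter> C" "lex_step n G j C = Some C"
proof -
  consider (new) "N j \<inter> C = {}"
    | (old) "N j \<inter> C \<noteq> {}" "\<exists>k\<in>{1..<j}. N k \<inter> C = N j \<inter> C"
    | (keep) "N j \<inter> C \<noteq> {}" "\<forall>k\<in>{1..<j}. N k \<inter> C \<noteq> N j \<inter> C"
    by blast
  then show thesis
  proof cases
    case old
    define k where "k = (LEAST k. k \<in> {1..<j} \<and> N k \<inter> C = N j \<inter> C)"
    have k: "k \<in> {1..<j}" "N k \<inter> C = N j \<inter> C"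
      using LeastI_ex[of "\<lambda>k. k \<in> {1..<j} \<and> N k \<inter> C = N j \<inter> C"] old(2)
      unfolding k_def by blast+
    show thesis
    proof (cases "N j = N k")
      case True
      then show thesis using twins k old by (simp add: lex_step_def N_def k_def Let_def)
    next
      case False
      then show thesis using separate k old by (simp add: lex_step_def N_def k_def Let_def)
    qed
  qed (simp_all add: that lex_step_def N_def Let_def)
qed

lemma lex_step_within_code:
  assumes code: "identifying_code {1..n} G {1..K}" and j: "j \<in> {1..n}" and C: "C \<subseteq> {1..K}"
  obtains C' where "lex_step n G j C = Some C'" "C' \<subseteq> {1..K}"
proof -
  let ?N = "nbhd {1..n} G"
  have Nj: "finite (?N j)" "?N j \<subseteq> {1..n}" using nbhd_atLeastAtMost[OF j] by auto
  have dist: "?N k \<inter> {1..K} \<noteq> ?N j \<inter> {1..K}" if "k \<in> {1..<j}" for k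
    using code j that unfolding identifying_code_def by auto
  show thesis
  proof (cases rule: lex_step_cases[of n G j C])
    case new
    have "?N j \<inter> {1..K} \<noteq> {}" using code j by (auto simp: identifying_code_def)
    then have "Min (?N j) \<in> {1..K}" using Nj by (intro Min_in_atLeastAtMost) auto
    then show thesis using new C that by simp
  next
    case (separate k)
    let ?S = "(?N j - ?N k) \<union> (?N k - ?N j)"
    have Nk: "finite (?N k)" "?N k \<subseteq> {1..n}" using nbhd_atLeastAtMost[of k n G] separate(1) j by auto
    have "?S \<inter> {1..K} \<noteq> {}" using dist[OF separate(1)] by blast
    then have "Min ?S \<in> {1..K}" using Nj Nk by (intro Min_in_atLeastAtMost) auto
    then show thesis using separate C that by simp
  next
    case (twins k)
    then show thesis using dist by metis
  qed (use C that in simp)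
qed

definition separates :: "'a set \<Rightarrow> ('a \<Rightarrow> 'a \<Rightarrow> bool) \<Rightarrow> 'a set \<Rightarrow> 'a set \<Rightarrow> bool" where
  "separates V E C J \<longleftrightarrow> (\<forall>v\<in>J. nbhd V E v \<inter> C \<noteq> {})
     \<and> (\<forall>v\<in>J. \<forall>w\<in>J. v \<noteq> w \<longrightarrow> nbhd V E v \<inter> C \<noteq> nbhd V E w \<inter> C)"

lemma identifying_code_iff_separates:
  "identifying_code V E C \<longleftrightarrow> C \<subseteq> V \<and> separates V E C V"
  unfolding identifying_code_def separates_def by blast

lemma separates_insert:
  assumes "separates V E C J" "C \<subseteq> C'" "nbhd V E j \<inter> C' \<noteq> {}"
    "\<forall>v\<in>J. nbhd V E v \<inter> C' \<noteq> nbhd V E j \<inter> C'"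
  shows "separates V E C' (insert j J)"
proof -
  have nonempty: "\<forall>v\<in>J. nbhd V E v \<inter> C \<noteq> {}"
    and distinct: "\<forall>v\<in>J. \<forall>w\<in>J. v \<noteq> w \<longrightarrow> nbhd V E v \<inter> C \<noteq> nbhd V E w \<inter> C"
    using assms(1) unfolding separates_def by auto
  show ?thesis unfolding separates_def
  proof (intro conjI ballI impI)
    fix v assume "v \<in> insert j J"
    then show "nbhd V E v \<inter> C' \<noteq> {}"
      using nonempty assms(2,3) by blast
  next
    fix v w assume "v \<in> insert j J" "w \<in> insert j J" "v \<noteq> w"
    then show "nbhd V E v \<inter> C' \<noteq> nbhd V E w \<inter> C'"
      using distinct assms(2,4) by blast
  qed
qed

lemma lex_step_separates:
  assumes step: "lex_step n G j C = Some C'" and j: "j \<in> {1..n}"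
    and C: "C \<subseteq> {1..n}" and sep: "separates {1..n} G C {1..<j}"
  shows "C' \<subseteq> {1..n}" "separates {1..n} G C' {1..j}"
proof -
  let ?N = "nbhd {1..n} G"
  have Nj: "j \<in> ?N j" "finite (?N j)" "?N j \<subseteq> {1..n}" using nbhd_atLeastAtMost[OF j] by auto
  have sepC: "?N v \<inter> C \<noteq> {}" "w \<noteq> v \<Longrightarrow> ?N w \<inter> C \<noteq> ?N v \<inter> C"
    if "v \<in> {1..<j}" "w \<in> {1..<j}" for v w
    using sep that unfolding separates_def by auto
  have new_vertex: "C \<subseteq> C' \<and> C' \<subseteq> {1..n} \<and> ?N j \<inter> C' \<noteq> {}
      \<and> (\<forall>v\<in>{1..<j}. ?N v \<inter> C' \<noteq> ?N j \<inter> C')"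
  proof (cases rule: lex_step_cases[of n G j C])
    case new
    have m: "Min (?N j) \<in> ?N j" using Nj by (intro Min_in) auto
    have C': "C' = insert (Min (?N j)) C" using new(2) step by simp
    have "?N v \<inter> C' \<noteq> ?N j \<inter> C'" if "v \<in> {1..<j}" for v
      using sepC(1)[OF that that] new(1) C' by blast
    then show ?thesis using C' m Nj C by auto
  next
    case (separate k)
    let ?S = "(?N j - ?N k) \<union> (?N k - ?N j)"
    have Nk: "finite (?N k)" "?N k \<subseteq> {1..n}" using nbhd_atLeastAtMost[of k n G] separate(1) j by auto
    have m: "Min ?S \<in> ?S" using separate(3) Nj Nk by (intro Min_in) auto
    have C': "C' = insert (Min ?S) C" using separate(4) step by simp
    have "?N v \<inter> C' \<noteq> ?N j \<inter> C'" if v: "v \<in> {1..<j}" for v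
    proof (cases "v = k")
      case True
      then show ?thesis using m C' by blast
    next
      case False
      then show ?thesis using sepC(2)[OF separate(1) v] separate(2) C' by blast
    qed
    moreover have "?N j \<inter> C \<noteq> {}" using sepC(1)[OF separate(1) separate(1)] separate(2) by simp
    ultimately show ?thesis using C' m Nj Nk C by auto
  next
    case (twins k)
    then show ?thesis using step by simp
  next
    case keep
    then show ?thesis using step C by simp
  qed
  then show "C' \<subseteq> {1..n}" by blast
  have "{1..j} = insert j {1..<j}" using j by auto
  then show "separates {1..n} G C' {1..j}"
    using separates_insert[OF sep] new_vertex by simp
qed

lemma lex_run_separates:
  "j \<le> n \<Longrightarrow> lex_run n G j = Some C \<Longrightarrow> C \<subseteq> {1..n} \<and> separates {1..n} G C {1..j}"
proof (induction j arbitrary: C)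
  case 0
  then show ?case by (simp add: separates_def)
next
  case (Suc j C')
  from Suc.prems obtain C where run: "lex_run n G j = Some C" and step: "lex_step n G (Suc j) C = Some C'"
    by (cases "lex_run n G j") auto
  have "C \<subseteq> {1..n}" "separates {1..n} G C {1..<Suc j}"
    using Suc.IH[OF _ run] Suc.prems(1) by (auto simp: atLeastLessThanSuc_atLeastAtMost)
  with step Suc.prems(1) show ?case using lex_step_separates[of n G "Suc j" C C'] by simp
qed

lemma lex_algorithm_identifying_code:
  "lex_algorithm n G = Some C \<Longrightarrow> identifying_code {1..n} G C"
  using lex_run_separates[of n n G C] by (simp add: lex_algorithm_def identifying_code_iff_separates)

lemma lex_run_within_code:
  assumes "identifying_code {1..n} G {1..K}"
  shows "j \<le> n \<Longrightarrow> \<exists>C. lex_run n G j = Some C \<and> C \<subseteq> {1..K}"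
proof (induction j)
  case (Suc j)
  then obtain C where "lex_run n G j = Some C" "C \<subseteq> {1..K}" by auto
  moreover obtain C' where "lex_step n G (Suc j) C = Some C'" "C' \<subseteq> {1..K}"
    using lex_step_within_code[OF assms _ \<open>C \<subseteq> {1..K}\<close>, of "Suc j"] Suc.prems by auto
  ultimately show ?case by simp
qed simp

lemma lex_algorithm_within_code:
  assumes "identifying_code {1..n} G {1..K}"
  obtains C where "lex_algorithm n G = Some C" "C \<subseteq> {1..K}"
  using lex_run_within_code[OF assms, of n] by (auto simp: lex_algorithm_def)

lemma lex_algorithm_card_le:
  assumes "identifying_code {1..n} G {1..K}"
  shows "\<exists>C. lex_algorithm n G = Some C \<and> card C \<le> K"
proof -
  obtain C where "lex_algorithm n G = Some C" "C \<subseteq> {1..K}"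
    using assms by (rule lex_algorithm_within_code)
  then show ?thesis using card_mono[of "{1..K}" C] by auto
qed

lemma bij_betw_nth_pred:
  assumes "distinct xs"
  shows "bij_betw (\<lambda>i. xs ! (i - 1)) {1..length xs} (set xs)"
proof -
  have "bij_betw (\<lambda>i. i - 1) {1..length xs} {..<length xs}"
    by (rule bij_betw_byWitness[where f' = Suc]) auto
  from bij_betw_trans[OF this bij_betw_nth[OF assms]] show ?thesis
    by (simp add: comp_def)
qed

lemma image_nth_pred_atLeastAtMost:
  assumes "k \<le> length xs"
  shows "(\<lambda>i. xs ! (i - 1)) ` {1..k} = set (take k xs)"
proof -
  have "(\<lambda>i. i - 1) ` {1..k} = {0..<k}"
    by (auto simp: image_iff intro!: bexI[where x = "Suc _"])
  then have "(\<lambda>i. xs ! (i - 1)) ` {1..k} = (!) xs ` {0..<k}"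
    by (metis image_image)
  with assms show ?thesis by (simp add: nth_image)
qed

lemma nbhd_bij_betw:
  assumes f: "bij_betw f V' V" and E: "\<forall>i\<in>V'. \<forall>j\<in>V'. E' i j = E (f i) (f j)" and i: "i \<in> V'"
  shows "nbhd V E (f i) = f ` nbhd V' E' i"
proof -
  have V: "V = f ` V'" using f by (simp add: bij_betw_def)
  show ?thesis unfolding nbhd_def V using E i by auto
qed

lemma identifying_code_bij_betw_iff:
  assumes f: "bij_betw f V' V" and E: "\<forall>i\<in>V'. \<forall>j\<in>V'. E' i j = E (f i) (f j)" and C: "C \<subseteq> V'"
  shows "identifying_code V E (f ` C) \<longleftrightarrow> identifying_code V' E' C"
proof -
  have inj: "inj_on f V'" and V: "V = f ` V'" using f by (auto simp: bij_betw_def)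
  have sub: "nbhd V' E' i \<subseteq> V'" if "i \<in> V'" for i
    using that by (auto simp: nbhd_def)
  have trace: "nbhd V E (f i) \<inter> f ` C = f ` (nbhd V' E' i \<inter> C)" if "i \<in> V'" for i
    using nbhd_bij_betw[OF f E that] inj_on_image_Int[OF inj sub[OF that] C] by simp
  have trace_eq: "f ` (nbhd V' E' i \<inter> C) = f ` (nbhd V' E' j \<inter> C) \<longleftrightarrow> nbhd V' E' i \<inter> C = nbhd V' E' j \<inter> C"
    for i j using inj_on_image_eq_iff[OF inj] C by (meson inf.coboundedI2)
  have ball_V: "(\<forall>v\<in>V. P v) \<longleftrightarrow> (\<forall>i\<in>V'. P (f i))" for P
    using V by blast
  have "separates V E (f ` C) V \<longleftrightarrow> separates V' E' C V'"
    unfolding separates_def ball_V using trace trace_eq inj_on_eq_iff[OF inj] by (simp cong: ball_cong)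
  then show ?thesis
    using C V by (auto simp: identifying_code_iff_separates)
qed

lemma identifying_code_relabel_iff:
  assumes xs: "xs \<in> permutations_of_set V" and C: "C \<subseteq> {1..card V}"
  shows "identifying_code V E ((\<lambda>i. xs ! (i - 1)) ` C) \<longleftrightarrow> identifying_code {1..card V} (relabel E xs) C"
proof -
  have "set xs = V" "distinct xs" "length xs = card V"
    using permutations_of_setD[OF xs] length_finite_permutations_of_set[OF xs] by auto
  then have "bij_betw (\<lambda>i. xs ! (i - 1)) {1..card V} V"
    using bij_betw_nth_pred by metis
  from identifying_code_bij_betw_iff[OF this _ C] show ?thesis
    by (simp add: relabel_def)
qed

lemma card_permutations_with_prefix_ge:
  assumes "finite V" "D \<subseteq> V"
  shows "fact (card D) * fact (card V - card D)
           \<le> card {xs \<in> permutations_of_set V. set (take (card D) xs) = D}"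
proof -
  let ?X = "permutations_of_set D \<times> permutations_of_set (V - D)"
  have len: "length a = card D" if "a \<in> permutations_of_set D" for a
    using that by (rule length_finite_permutations_of_set)
  have "inj_on (\<lambda>(a, b). a @ b) ?X"
    by (rule inj_onI) (auto simp: append_eq_append_conv dest!: len)
  moreover have "a @ b \<in> permutations_of_set V" "set (take (card D) (a @ b)) = D"
    if "a \<in> permutations_of_set D" "b \<in> permutations_of_set (V - D)" for a b
    using permutations_of_setD[OF that(1)] permutations_of_setD[OF that(2)] len[OF that(1)] assms(2)
    by (auto intro!: permutations_of_setI)
  then have "(\<lambda>(a, b). a @ b) ` ?X \<subseteq> {xs \<in> permutations_of_set V. set (take (card D) xs) = D}"
    by auto
  ultimately have "card ?X \<le> card {xs \<in> permutations_of_set V. set (take (card D) xs) = D}"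
    by (intro card_inj_on_le) simp_all
  moreover have "card ?X = fact (card D) * fact (card V - card D)"
    using assms finite_subset[OF assms(2)] by (simp add: card_cartesian_product card_Diff_subset)
  ultimately show ?thesis by simp
qed

lemma id_code_number_le_card:
  "identifying_code V E C \<Longrightarrow> id_code_number V E \<le> card C"
  unfolding id_code_number_def by (rule Least_le) blast

lemma minimum_identifying_code_exists:
  assumes "twin_free V E"
  obtains C where "identifying_code V E C" "card C = id_code_number V E"
proof -
  have V: "identifying_code V E V"
    using assms unfolding identifying_code_def twin_free_def nbhd_def by auto
  have "\<exists>C. identifying_code V E C \<and> card C = id_code_number V E"
    unfolding id_code_number_def
    by (rule LeastI_ex[where P = "\<lambda>k. \<exists>C. identifying_code V E C \<and> card C = k"]) (use V in blast)
  then show thesis using that by blast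
qed

lemma lex_algorithm_optimal_if_code_first:
  assumes xs: "xs \<in> permutations_of_set V"
    and Cs: "identifying_code V E Cs" "card Cs = id_code_number V E"
    and prefix: "set (take (card Cs) xs) = Cs"
  shows "\<exists>C. lex_algorithm (card V) (relabel E xs) = Some C
    \<and> identifying_code {1..card V} (relabel E xs) C \<and> card C = card Cs"
proof -
  let ?k = "card Cs" and ?f = "\<lambda>i. xs ! (i - 1)"
  have len: "length xs = card V" and fin: "finite V"
    using length_finite_permutations_of_set[OF xs] permutations_of_setD(1)[OF xs] by auto
  have k: "?k \<le> card V"
    using Cs(1) fin by (auto simp: identifying_code_def intro: card_mono)
  have "?f ` {1..?k} = Cs"
    using image_nth_pred_atLeastAtMost[of ?k xs] k len prefix by simp
  then have "identifying_code {1..card V} (relabel E xs) {1..?k}"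
    using identifying_code_relabel_iff[OF xs, of "{1..?k}" E] k Cs(1) by simp
  then obtain C where run: "lex_algorithm (card V) (relabel E xs) = Some C" and C: "C \<subseteq> {1..?k}"
    by (rule lex_algorithm_within_code)
  have code: "identifying_code {1..card V} (relabel E xs) C"
    using run by (rule lex_algorithm_identifying_code)
  moreover have "C \<subseteq> {1..card V}"
    using C k by auto
  ultimately have "identifying_code V E (?f ` C)"
    using identifying_code_relabel_iff[OF xs] by blast
  then have "id_code_number V E \<le> card C"
    using id_code_number_le_card card_image_le[of C ?f] finite_subset[OF C] by fastforce
  moreover have "card C \<le> ?k"
    using card_mono[of "{1..?k}" C] C by simp
  ultimately show ?thesis
    using run code Cs(2) by auto
qed

lemma prob_pmf_of_set_ge_card:
  assumes "finite S" "S \<noteq> {}" "T \<subseteq> S \<inter> A"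
  shows "card T / card S \<le> measure_pmf.prob (pmf_of_set S) A"
proof -
  have "card T \<le> card (S \<inter> A)"
    using assms by (intro card_mono) auto
  then show ?thesis
    using measure_pmf_of_set[OF assms(2,1)] by (simp add: divide_right_mono)
qed

lemma prob_initial_segment_ge:
  assumes fin: "finite V" and D: "D \<subseteq> V"
    and A: "\<And>xs. xs \<in> permutations_of_set V \<Longrightarrow> set (take (card D) xs) = D \<Longrightarrow> xs \<in> A"
  shows "1 / real (card V choose card D) \<le> measure_pmf.prob (pmf_of_set (permutations_of_set V)) A"
proof -
  let ?n = "card V" and ?k = "card D" and ?S = "permutations_of_set V"
  let ?T = "{xs \<in> ?S. set (take ?k xs) = D}"
  have k: "?k \<le> ?n" using fin D by (rule card_mono)
  have "real (fact ?k * fact (?n - ?k)) \<le> card ?T"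
    using card_permutations_with_prefix_ge[OF fin D] by (simp only: of_nat_le_iff)
  then have "fact ?k * fact (?n - ?k) / fact ?n \<le> card ?T / card ?S"
    using fin by (simp add: divide_right_mono)
  also have "\<dots> \<le> measure_pmf.prob (pmf_of_set ?S) A"
    using fin A by (intro prob_pmf_of_set_ge_card) auto
  finally show ?thesis
    unfolding binomial_fact[OF k, where 'a = real] by simp
qed

theorem mainTheorem5:
  fixes V :: "'a set" and E :: "'a \<Rightarrow> 'a \<Rightarrow> bool" and n :: nat
  assumes "simple_graph V E" and "twin_free V E" and "card V = n"
  defines "P \<equiv> pmf_of_set (permutations_of_set V)"
  shows "(\<forall>K\<in>{1..n}.
            measure_pmf.prob P {xs. \<exists>C. lex_algorithm n (relabel E xs) = Some C \<and> card C \<le> K}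
          \<ge> measure_pmf.prob P {xs. identifying_code {1..n} (relabel E xs) {1..K}})
       \<and> measure_pmf.prob P {xs. \<exists>C. lex_algorithm n (relabel E xs) = Some C
              \<and> identifying_code {1..n} (relabel E xs) C \<and> card C = id_code_number V E}
          \<ge> 1 / real (n choose id_code_number V E)"
proof (intro conjI ballI)
  fix K
  have "{xs. identifying_code {1..n} (relabel E xs) {1..K}}
      \<subseteq> {xs. \<exists>C. lex_algorithm n (relabel E xs) = Some C \<and> card C \<le> K}"
    using lex_algorithm_card_le by blast
  then show "measure_pmf.prob P {xs. \<exists>C. lex_algorithm n (relabel E xs) = Some C \<and> card C \<le> K}
      \<ge> measure_pmf.prob P {xs. identifying_code {1..n} (relabel E xs) {1..K}}"
    by (rule measure_pmf.finite_measure_mono) simp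
next
  \<comment> \<open>of \<open>simple_graph\<close> only the finiteness of V is needed\<close>
  have fin: "finite V" using assms(1) by (simp add: simple_graph_def)
  obtain Cs where Cs: "identifying_code V E Cs" "card Cs = id_code_number V E"
    using minimum_identifying_code_exists[OF assms(2)] .
  have CsV: "Cs \<subseteq> V" using Cs(1) by (simp add: identifying_code_def)
  have "1 / real (card V choose card Cs) \<le> measure_pmf.prob P {xs. \<exists>C. lex_algorithm (card V) (relabel E xs) = Some C
      \<and> identifying_code {1..card V} (relabel E xs) C \<and> card C = card Cs}"
    unfolding P_def using lex_algorithm_optimal_if_code_first[OF _ Cs]
    by (intro prob_initial_segment_ge[OF fin CsV]) simp
  then show "measure_pmf.prob P {xs. \<exists>C. lex_algorithm n (relabel E xs) = Some C
              \<and> identifying_code {1..n} (relabel E xs) C \<and> card C = id_code_number V E}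
      \<ge> 1 / real (n choose id_code_number V E)"
    using assms(3) Cs(2) by simp
qed

end
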